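(* Let $T\in V$ be a target variable. If $\zeta_T=n$ (i.e. $T\in\Upsilon_i$ for all $i$) and the family $\{\Upsilon_1\setminus\{T\},\dots,\Upsilon_n\setminus\{T\}\}$ is not conservative, then $\bigcup_{i=1}^{n}MB_i(T)\subseteq ch(T)\cup sp(T)$.
   Context: Let $G=(V,E)$ be a DAG (causal Bayesian network) over a finite set $V$ of random variables with joint distribution $P$ satisfying the Markov condition with respect to $G$; causal sufficiency is assumed. For $X\in V$, $pa(X)$ and $ch(X)$ are the parents and children of $X$ in $G$, $sp(X)=\big(\bigcup_{Y\in ch(X)}pa(Y)\big)\setminus\{X\}$ is the set of spouses. There are $n\ge 1$ intervention experiments; in the $i$-th, the set $\Upsilon_i\subseteq V$ is manipulated. The post-intervention DAG is $G_i=(V,E_i)$ with $E_i=\{(a,b)\in E: b\notin\Upsilon_i\}$, with distribution $P_i(V)=\prod_{V_j\notin\Upsilon_i}P(V_j\mid pa(V_j))\prod_{V_j\in\Upsilon_i}P_i(V_j)$, and $D_i$ is a dataset drawn from $P_i$. It is assumed that each $P_i$ is faithful to $G_i$ and that conditional independence tests on $D_i$ are reliable (return exactly the conditional independences of $P_i$). $MB_i(T)$ denotes the Markov blanket of $T$ found in $D_i$, i.e. the set of parents, children and spouses of $T$ in $G_i$. $\zeta_T=|\{i:T\in\Upsilon_i\}|$. A family $\{A_1,\dots,A_n\}$ of subsets of $V$ is called conservative if for every $V_j\in\bigcup_{i=1}^n A_i$ there exists $i$ with $V_j\notin A_i$. *)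

theory Defs
  imports Main
begin

definition is_dag :: "'a set \<Rightarrow> ('a \<times> 'a) set \<Rightarrow> bool" where
  "is_dag V E \<longleftrightarrow> finite V \<and> E \<subseteq> V \<times> V \<and> acyclic E"

definition pa :: "('a \<times> 'a) set \<Rightarrow> 'a \<Rightarrow> 'a set" where
  "pa E X = {a. (a, X) \<in> E}"

definition ch :: "('a \<times> 'a) set \<Rightarrow> 'a \<Rightarrow> 'a set" where
  "ch E X = {b. (X, b) \<in> E}"

definition sp :: "('a \<times> 'a) set \<Rightarrow> 'a \<Rightarrow> 'a set" where
  "sp E X = (\<Union>Y\<in>ch E X. pa E Y) - {X}"

definition post_int_edges :: "('a \<times> 'a) set \<Rightarrow> 'a set \<Rightarrow> ('a \<times> 'a) set" where
  "post_int_edges E U = {(a, b). (a, b) \<in> E \<and> b \<notin> U}"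

definition MB :: "('a \<times> 'a) set \<Rightarrow> 'a \<Rightarrow> 'a set" where
  "MB E X = pa E X \<union> ch E X \<union> sp E X"

definition zeta :: "(nat \<Rightarrow> 'a set) \<Rightarrow> nat \<Rightarrow> 'a \<Rightarrow> nat" where
  "zeta Ups n T = card {i \<in> {1..n}. T \<in> Ups i}"

definition conservative :: "(nat \<Rightarrow> 'a set) \<Rightarrow> nat \<Rightarrow> bool" where
  "conservative A n \<longleftrightarrow> (\<forall>v \<in> (\<Union>i\<in>{1..n}. A i). \<exists>i\<in>{1..n}. v \<notin> A i)"

end

theory Submission
  imports Defs
begin

text \<open>Manipulating \<open>T\<close> deletes every edge into \<open>T\<close>, so in each post-intervention graph \<open>T\<close>
  has no parents, while deleting edges can only shrink the sets of children and spouses.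
  Hence every Markov blanket \<open>MB\<^sub>i(T)\<close> consists of children and spouses of \<open>T\<close> in the
  original graph.\<close>

lemma zeta_eq_iff_manipulated_everywhere:
  "zeta Ups n T = n \<longleftrightarrow> (\<forall>i\<in>{1..n}. T \<in> Ups i)"
proof
  have sub: "{i \<in> {1..n}. T \<in> Ups i} \<subseteq> {1..n}" by blast
  assume "zeta Ups n T = n"
  then have "{i \<in> {1..n}. T \<in> Ups i} = {1..n}"
    using card_subset_eq[OF _ sub] unfolding zeta_def by simp
  then show "\<forall>i\<in>{1..n}. T \<in> Ups i" by blast
next
  assume "\<forall>i\<in>{1..n}. T \<in> Ups i"
  then have "{i \<in> {1..n}. T \<in> Ups i} = {1..n}" by blast
  then show "zeta Ups n T = n" unfolding zeta_def by simp
qed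

lemma pa_post_int_edges_manipulated:
  "X \<in> U \<Longrightarrow> pa (post_int_edges E U) X = {}"
  unfolding pa_def post_int_edges_def by auto

lemma post_int_edges_subset: "post_int_edges E U \<subseteq> E"
  unfolding post_int_edges_def by auto

lemma ch_mono: "E' \<subseteq> E \<Longrightarrow> ch E' X \<subseteq> ch E X"
  unfolding ch_def by auto

lemma sp_mono: "E' \<subseteq> E \<Longrightarrow> sp E' X \<subseteq> sp E X"
  unfolding sp_def ch_def pa_def by auto

lemma MB_post_int_edges_manipulated:
  assumes "X \<in> U"
  shows "MB (post_int_edges E U) X \<subseteq> ch E X \<union> sp E X"
  using pa_post_int_edges_manipulated[OF assms] ch_mono[OF post_int_edges_subset, of E U X]
    sp_mono[OF post_int_edges_subset, of E U X]
  unfolding MB_def by blast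

theorem theorem9:
  fixes V :: "'a set" and E :: "('a \<times> 'a) set" and n :: nat
    and Ups :: "nat \<Rightarrow> 'a set" and T :: 'a
  assumes dag: "is_dag V E"
    and n_pos: "n \<ge> 1"
    and Ups_sub: "\<forall>i\<in>{1..n}. Ups i \<subseteq> V"
    and T_in: "T \<in> V"
    and zeta_n: "zeta Ups n T = n"
    and not_cons: "\<not> conservative (\<lambda>i. Ups i - {T}) n"
  shows "(\<Union>i\<in>{1..n}. MB (post_int_edges E (Ups i)) T) \<subseteq> ch E T \<union> sp E T"
proof -
  have "T \<in> Ups i" if "i \<in> {1..n}" for i
    using zeta_n that by (simp add: zeta_eq_iff_manipulated_everywhere)
  then show ?thesis
    by (intro UN_least MB_post_int_edges_manipulated)
qed

end
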